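(* Let $\mathcal{R}$ be a von Neumann algebra acting on a Hilbert space $\mathcal{H}$ that is the ultraweak closure of an ascending union $\bigcup_n \mathfrak{A}_n$ of finite-dimensional C$^*$-algebras $\mathfrak{A}_1\subseteq\mathfrak{A}_2\subseteq\cdots$ (containing $I$), and for each $n$ let $\mathcal{U}_n$ be a finite group of unitary elements of $\mathfrak{A}_n$ that spans $\mathfrak{A}_n$ linearly. Let $p$ be a free ultrafilter on $\mathbb{N}$ and define $\Phi_{t,p}:\mathcal{B}(\mathcal{H})\to\mathcal{B}(\mathcal{H})$ by $$\Phi_{t,p}(T)=\text{weak-operator }\lim_{n\to p}\ \frac{1}{|\mathcal{U}_n|}\sum_{U\in\mathcal{U}_n}UTU^*.$$ Then $\Phi_{t,p}$ is a conditional expectation (a norm-one linear idempotent map) of $\mathcal{B}(\mathcal{H})$ onto the commutant $\mathcal{R}'$, and for every von Neumann algebra $\mathcal{S}$ with $\mathcal{R}\subseteq\mathcal{S}\subseteq\mathcal{B}(\mathcal{H})$, the restriction of $\Phi_{t,p}$ to $\mathcal{S}$ is a proper conditional expectation of $\mathcal{S}$ onto $\mathcal{S}\cap\mathcal{R}'$.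
   Context: A conditional expectation $\Psi$ of a von Neumann algebra $\mathcal{S}$ onto a von Neumann subalgebra is called proper when $\Psi(T)\in\mathrm{co}_{\mathcal{S}}(T)^-$ for every $T\in\mathcal{S}$, where $\mathrm{co}_{\mathcal{S}}(T)$ is the convex hull of $\{UTU^*: U\text{ a unitary in }\mathcal{S}\}$ and $^-$ denotes weak-operator closure. (The weak-operator limit along $p$ exists since the averages are uniformly bounded by $\|T\|$ and bounded sets are weak-operator compact.) *)

theory Defs
  imports Complex_Main
begin

text \<open>Complex inner product space; the inner product is conjugate-linear in the
first and linear in the second argument.\<close>
class complex_inner_space = ab_group_add +
  fixes scaleC :: "complex \<Rightarrow> 'a \<Rightarrow> 'a" (infixr "*\<^sub>C" 75)
    and cinner :: "'a \<Rightarrow> 'a \<Rightarrow> complex"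
  assumes scaleC_add_right: "a *\<^sub>C (x + y) = a *\<^sub>C x + a *\<^sub>C y"
    and scaleC_add_left: "(a + b) *\<^sub>C x = a *\<^sub>C x + b *\<^sub>C x"
    and scaleC_scaleC: "a *\<^sub>C (b *\<^sub>C x) = (a * b) *\<^sub>C x"
    and scaleC_one: "1 *\<^sub>C x = x"
    and cinner_conj: "cinner x y = cnj (cinner y x)"
    and cinner_add_right: "cinner x (y + z) = cinner x y + cinner x z"
    and cinner_scaleC_right: "cinner x (a *\<^sub>C y) = a * cinner x y"
    and cinner_nonneg: "0 \<le> Re (cinner x x)"
    and cinner_eq_zero: "cinner x x = 0 \<longleftrightarrow> x = 0"

class complex_hilbert_space = complex_inner_space +
  assumes hilbert_complete:
    "(\<forall>e>0. \<exists>N::nat. \<forall>m\<ge>N. \<forall>n\<ge>N. sqrt (Re (cinner (X m - X n) (X m - X n))) < e)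
      \<Longrightarrow> (\<exists>L. \<forall>e>0. \<exists>N::nat. \<forall>n\<ge>N. sqrt (Re (cinner (X n - L) (X n - L))) < e)"

definition hnorm :: "'h::complex_inner_space \<Rightarrow> real" where
  "hnorm x = sqrt (Re (cinner x x))"

type_synonym 'h op = "'h \<Rightarrow> 'h"

definition bounded_op :: "'h::complex_inner_space op \<Rightarrow> bool" where
  "bounded_op T \<longleftrightarrow> (\<forall>x y. T (x + y) = T x + T y) \<and> (\<forall>a x. T (a *\<^sub>C x) = a *\<^sub>C T x)
     \<and> (\<exists>K. \<forall>x. hnorm (T x) \<le> K * hnorm x)"

definition BH :: "'h::complex_inner_space op set" where
  "BH = {T. bounded_op T}"

definition opnorm :: "'h::complex_inner_space op \<Rightarrow> real" where
  "opnorm T = Sup {hnorm (T x) | x. hnorm x \<le> 1}"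

definition adj :: "'h::complex_inner_space op \<Rightarrow> 'h op" where
  "adj T = (THE S. \<forall>x y. cinner (T x) y = cinner x (S y))"

definition op_plus :: "'h::complex_inner_space op \<Rightarrow> 'h op \<Rightarrow> 'h op" where
  "op_plus S T = (\<lambda>x. S x + T x)"

definition op_scale :: "complex \<Rightarrow> 'h::complex_inner_space op \<Rightarrow> 'h op" where
  "op_scale a T = (\<lambda>x. a *\<^sub>C T x)"

definition op_zero :: "'h::complex_inner_space op" where
  "op_zero = (\<lambda>x. 0)"

definition op_span :: "'h::complex_inner_space op set \<Rightarrow> 'h op set" where
  "op_span B = {(\<lambda>x. \<Sum>b\<in>B. c b *\<^sub>C b x) | c. True}"

definition star_subalgebra :: "'h::complex_inner_space op set \<Rightarrow> bool" where
  "star_subalgebra A \<longleftrightarrow> A \<subseteq> BH \<and> id \<in> A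
     \<and> (\<forall>S\<in>A. \<forall>T\<in>A. op_plus S T \<in> A \<and> S \<circ> T \<in> A)
     \<and> (\<forall>a. \<forall>T\<in>A. op_scale a T \<in> A) \<and> (\<forall>T\<in>A. adj T \<in> A)"

definition wot_closure :: "'h::complex_inner_space op set \<Rightarrow> 'h op set" where
  "wot_closure A = {X \<in> BH. \<forall>F :: ('h \<times> 'h) set. finite F \<longrightarrow>
     (\<forall>e>0. \<exists>a\<in>A. \<forall>(x, y)\<in>F. cmod (cinner (X x) y - cinner (a x) y) < e)}"

text \<open>Ultraweak (sigma-weak) closure in B(H): basic neighbourhoods are given by finitely many
  seminorms \<open>T \<mapsto> |\<Sum>i. \<langle>T x_i, y_i\<rangle>|\<close> with square-summable sequences.\<close>
definition ultraweak_closure :: "'h::complex_inner_space op set \<Rightarrow> 'h op set" where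
  "ultraweak_closure A = {X \<in> BH. \<forall>(k::nat) (x :: nat \<Rightarrow> nat \<Rightarrow> 'h) (y :: nat \<Rightarrow> nat \<Rightarrow> 'h).
     (\<forall>j<k. summable (\<lambda>i. (hnorm (x j i))\<^sup>2) \<and> summable (\<lambda>i. (hnorm (y j i))\<^sup>2)) \<longrightarrow>
     (\<forall>e>0. \<exists>a\<in>A. \<forall>j<k. cmod (\<Sum>i. cinner (X (x j i)) (y j i) - cinner (a (x j i)) (y j i)) < e)}"

definition von_neumann_algebra :: "'h::complex_inner_space op set \<Rightarrow> bool" where
  "von_neumann_algebra A \<longleftrightarrow> star_subalgebra A \<and> wot_closure A \<subseteq> A"

text \<open>Finite-dimensional C*-subalgebra of B(H) containing I (norm-closedness is automatic
  for a finite-dimensional subspace).\<close>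
definition fin_dim_C_star :: "'h::complex_inner_space op set \<Rightarrow> bool" where
  "fin_dim_C_star A \<longleftrightarrow> star_subalgebra A \<and> (\<exists>B. finite B \<and> B \<subseteq> A \<and> op_span B = A)"

definition commutant :: "'h::complex_inner_space op set \<Rightarrow> 'h op set" where
  "commutant A = {T \<in> BH. \<forall>a\<in>A. T \<circ> a = a \<circ> T}"

definition unitaries :: "'h::complex_inner_space op set \<Rightarrow> 'h op set" where
  "unitaries A = {V \<in> A. V \<circ> adj V = id \<and> adj V \<circ> V = id}"

definition finite_unitary_group :: "'h::complex_inner_space op set \<Rightarrow> 'h op set \<Rightarrow> bool" where
  "finite_unitary_group U A \<longleftrightarrow> finite U \<and> U \<subseteq> unitaries A \<and> id \<in> U
     \<and> (\<forall>V\<in>U. \<forall>W\<in>U. V \<circ> W \<in> U) \<and> (\<forall>V\<in>U. adj V \<in> U)"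

definition cond_exp :: "('h::complex_inner_space op \<Rightarrow> 'h op) \<Rightarrow> 'h op set \<Rightarrow> 'h op set \<Rightarrow> bool" where
  "cond_exp \<Psi> S M \<longleftrightarrow> \<Psi> ` S = M
     \<and> (\<forall>T\<in>S. \<Psi> (\<Psi> T) = \<Psi> T)
     \<and> (\<forall>T1\<in>S. \<forall>T2\<in>S. \<Psi> (op_plus T1 T2) = op_plus (\<Psi> T1) (\<Psi> T2))
     \<and> (\<forall>a. \<forall>T\<in>S. \<Psi> (op_scale a T) = op_scale a (\<Psi> T))
     \<and> Sup {opnorm (\<Psi> T) | T. T \<in> S \<and> opnorm T \<le> 1} = 1"

definition unitary_conv_hull :: "'h::complex_inner_space op set \<Rightarrow> 'h op \<Rightarrow> 'h op set" where
  "unitary_conv_hull S T = {(\<lambda>x. \<Sum>i<k. complex_of_real (c i) *\<^sub>C V i (T (adj (V i) x)))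
     | k (c :: nat \<Rightarrow> real) V. (\<forall>i<k. 0 \<le> c i \<and> V i \<in> unitaries S) \<and> (\<Sum>i<k. c i) = 1}"

definition proper_cond_exp :: "('h::complex_inner_space op \<Rightarrow> 'h op) \<Rightarrow> 'h op set \<Rightarrow> 'h op set \<Rightarrow> bool" where
  "proper_cond_exp \<Psi> S M \<longleftrightarrow> cond_exp \<Psi> S M
     \<and> (\<forall>T\<in>S. \<Psi> T \<in> wot_closure (unitary_conv_hull S T))"

definition free_ultrafilter :: "nat filter \<Rightarrow> bool" where
  "free_ultrafilter p \<longleftrightarrow> p \<noteq> bot
     \<and> (\<forall>P. eventually P p \<or> eventually (\<lambda>n. \<not> P n) p)
     \<and> (\<forall>n. eventually (\<lambda>m. m \<noteq> n) p)"

definition unitary_average :: "'h::complex_inner_space op set \<Rightarrow> 'h op \<Rightarrow> 'h op" where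
  "unitary_average U T = (\<lambda>x. (1 / of_nat (card U)) *\<^sub>C (\<Sum>V\<in>U. V (T (adj V x))))"

definition Phi_tp :: "(nat \<Rightarrow> 'h::complex_inner_space op set) \<Rightarrow> nat filter \<Rightarrow> 'h op \<Rightarrow> 'h op" where
  "Phi_tp U p T = (THE S. S \<in> BH \<and>
     (\<forall>x y. ((\<lambda>n. cinner (unitary_average (U n) T x) y) \<longlongrightarrow> cinner (S x) y) p))"

end

theory Submission
  imports Defs "HOL-Analysis.Analysis"
begin

text \<open>Averaging \<open>T\<close> over the finite unitary group \<open>\<U>\<^sub>n\<close> is a contraction that fixes every
  operator commuting with \<open>\<U>\<^sub>n\<close> and whose values commute with \<open>\<U>\<^sub>n\<close>, hence with its span
  \<open>\<AA>\<^sub>n\<close>. The averages of \<open>T\<close> are uniformly bounded, so their matrix coefficients converge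
  along the ultrafilter \<open>p\<close>, and by the Riesz representation theorem the limit form is given
  by a bounded operator \<open>\<Phi>(T)\<close>. Linearity and the norm bound pass to the limit; as \<open>p\<close> is
  free, \<open>\<Phi>(T)\<close> commutes with every \<open>\<AA>\<^sub>m\<close> and hence with their ultraweak closure
  \<open>\<R>\<close>, while operators in \<open>\<R>'\<close> are fixed. Finally each average of \<open>T \<in> \<S>\<close> is a
  convex combination of conjugates of \<open>T\<close> by unitaries of \<open>\<S>\<close>, so \<open>\<Phi>(T)\<close> lies in the
  weak-operator closure of \<open>co\<^sub>\<S>(T)\<close>, and in particular in \<open>\<S>\<close>.\<close>

global_interpretation cvs: vector_space "scaleC :: complex \<Rightarrow> 'a \<Rightarrow> 'a::complex_inner_space"
  by unfold_locales (simp_all add: scaleC_add_right scaleC_add_left scaleC_scaleC scaleC_one)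

lemma cinner_add_left: "cinner (x + y) z = cinner x z + cinner y z"
  by (metis cinner_conj cinner_add_right complex_cnj_add)

lemma cinner_scaleC_left: "cinner (a *\<^sub>C x) y = cnj a * cinner x y"
  by (metis cinner_conj cinner_scaleC_right complex_cnj_mult)

lemma cinner_zero_right [simp]: "cinner x 0 = 0"
  by (metis add_cancel_right_right add_0 cinner_add_right)

lemma cinner_zero_left [simp]: "cinner 0 x = 0"
  by (metis cinner_conj cinner_zero_right complex_cnj_zero)

lemma cinner_minus_right: "cinner x (- y) = - cinner x y"
  by (metis cinner_add_right cinner_zero_right eq_neg_iff_add_eq_0)

lemma cinner_minus_left: "cinner (- x) y = - cinner x y"
  by (metis cinner_add_left cinner_zero_left eq_neg_iff_add_eq_0)

lemma cinner_diff_right: "cinner x (y - z) = cinner x y - cinner x z"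
  using cinner_add_right[of x y "- z"] by (simp add: cinner_minus_right)

lemma cinner_diff_left: "cinner (x - z) y = cinner x y - cinner z y"
  using cinner_add_left[of x "- z" y] by (simp add: cinner_minus_left)

lemma cinner_eq_imp_eq_left: "(\<And>y. cinner a y = cinner b y) \<Longrightarrow> a = b"
  by (metis cinner_diff_left cinner_eq_zero eq_iff_diff_eq_0)

lemma cinner_eq_imp_eq_right: "(\<And>y. cinner y a = cinner y b) \<Longrightarrow> a = b"
  by (metis cinner_diff_right cinner_eq_zero eq_iff_diff_eq_0)

lemma cinner_self_real: "cinner x x = complex_of_real (Re (cinner x x))"
proof -
  have "Im (cinner x x) = - Im (cinner x x)"
    by (subst cinner_conj) simp
  then show ?thesis
    by (simp add: complex_eq_iff)
qed

lemma hnorm_nonneg [simp]: "0 \<le> hnorm x"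
  by (simp add: hnorm_def cinner_nonneg)

lemma hnorm_power2: "(hnorm x)\<^sup>2 = Re (cinner x x)"
  by (simp add: hnorm_def cinner_nonneg)

lemma cinner_self_eq_hnorm_power2: "cinner x x = complex_of_real ((hnorm x)\<^sup>2)"
  by (simp add: hnorm_power2 flip: cinner_self_real)

lemma hnorm_eq_zero [simp]: "hnorm x = 0 \<longleftrightarrow> x = 0"
proof
  assume "hnorm x = 0"
  then have "cinner x x = 0"
    by (simp add: cinner_self_eq_hnorm_power2)
  then show "x = 0"
    by (simp add: cinner_eq_zero)
qed (simp add: hnorm_def)

lemma hnorm_zero [simp]: "hnorm 0 = 0"
  by simp

lemma hnorm_pos: "x \<noteq> 0 \<Longrightarrow> 0 < hnorm x"
  using hnorm_eq_zero hnorm_nonneg by (metis less_eq_real_def)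

lemma hnorm_scaleC: "hnorm (a *\<^sub>C x) = cmod a * hnorm x"
proof -
  have "cinner (a *\<^sub>C x) (a *\<^sub>C x) = (cnj a * a) * cinner x x"
    by (simp add: cinner_scaleC_left cinner_scaleC_right)
  also have "cnj a * a = complex_of_real ((cmod a)\<^sup>2)"
    by (metis complex_norm_square mult.commute)
  finally have "Re (cinner (a *\<^sub>C x) (a *\<^sub>C x)) = (cmod a)\<^sup>2 * (hnorm x)\<^sup>2"
    by (simp add: cinner_self_eq_hnorm_power2)
  then have "(hnorm (a *\<^sub>C x))\<^sup>2 = (cmod a * hnorm x)\<^sup>2"
    by (simp add: hnorm_power2 power_mult_distrib)
  then show ?thesis
    by (simp add: power2_eq_iff_nonneg)
qed

lemma hnorm_minus_commute: "hnorm (x - y) = hnorm (y - x)"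
  by (metis hnorm_def cinner_minus_left cinner_minus_right minus_diff_eq minus_minus)

lemma hnorm_diff_scaleC_power2:
  "(hnorm (x - t *\<^sub>C y))\<^sup>2 = (hnorm x)\<^sup>2 - 2 * Re (t * cinner x y) + (cmod t)\<^sup>2 * (hnorm y)\<^sup>2"
proof -
  have expand: "cinner (x - t *\<^sub>C y) (x - t *\<^sub>C y) =
      cinner x x - t * cinner x y - cnj t * cinner y x + cnj t * (t * cinner y y)"
    by (simp only: cinner_diff_left cinner_diff_right cinner_scaleC_left cinner_scaleC_right)
      (simp add: algebra_simps)
  have "cinner (x - t *\<^sub>C y) (x - t *\<^sub>C y) =
      cinner x x - (t * cinner x y + cnj (t * cinner x y)) + (cnj t * t) * cinner y y"
    unfolding expand cinner_conj[of y x] complex_cnj_mult by algebra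
  moreover have "t * cinner x y + cnj (t * cinner x y) = complex_of_real (2 * Re (t * cinner x y))"
    by (simp add: complex_eq_iff)
  moreover have "cnj t * t = complex_of_real ((cmod t)\<^sup>2)"
    by (metis complex_norm_square mult.commute)
  ultimately have "Re (cinner (x - t *\<^sub>C y) (x - t *\<^sub>C y)) =
      Re (cinner x x) - 2 * Re (t * cinner x y) + (cmod t)\<^sup>2 * Re (cinner y y)"
    by (simp add: cinner_self_eq_hnorm_power2)
  then show ?thesis
    by (simp add: hnorm_power2)
qed

text \<open>The choice \<open>t = \<langle>x, y\<rangle>\<^sup>* / \<parallel>y\<parallel>\<^sup>2\<close> minimises \<open>\<parallel>x - t y\<parallel>\<close>.\<close>
lemma hnorm_diff_projection_power2:
  assumes "y \<noteq> 0"
  shows "(hnorm (x - (cnj (cinner x y) / complex_of_real ((hnorm y)\<^sup>2)) *\<^sub>C y))\<^sup>2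
     = (hnorm x)\<^sup>2 - (cmod (cinner x y))\<^sup>2 / (hnorm y)\<^sup>2"
proof -
  define a where "a = cinner x y"
  define r where "r = (hnorm y)\<^sup>2"
  define t where "t = cnj a / complex_of_real r"
  have r: "r > 0"
    using assms hnorm_pos r_def by simp
  have "t * a = (a * cnj a) / complex_of_real r"
    unfolding t_def by (simp add: field_simps del: complex_mult_cnj)
  also have "a * cnj a = complex_of_real ((cmod a)\<^sup>2)"
    by (rule complex_norm_square[symmetric])
  finally have ta: "t * a = complex_of_real ((cmod a)\<^sup>2 / r)"
    by simp
  have "(hnorm (x - t *\<^sub>C y))\<^sup>2 = (hnorm x)\<^sup>2 - 2 * Re (t * a) + (cmod t)\<^sup>2 * r"
    unfolding a_def r_def by (rule hnorm_diff_scaleC_power2)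
  also have "(cmod t)\<^sup>2 * r = (cmod a)\<^sup>2 / r"
    unfolding t_def using r by (simp add: norm_divide power2_eq_square)
  finally show ?thesis
    unfolding ta unfolding t_def a_def r_def by simp
qed

lemma cinner_Cauchy_Schwarz: "cmod (cinner x y) \<le> hnorm x * hnorm y"
proof (cases "y = 0")
  case False
  have r: "(hnorm y)\<^sup>2 > 0"
    using False hnorm_pos by simp
  have "0 \<le> (hnorm (x - (cnj (cinner x y) / complex_of_real ((hnorm y)\<^sup>2)) *\<^sub>C y))\<^sup>2"
    by simp
  then have "(cmod (cinner x y))\<^sup>2 / (hnorm y)\<^sup>2 \<le> (hnorm x)\<^sup>2"
    unfolding hnorm_diff_projection_power2[OF False] by simp
  then have "(cmod (cinner x y))\<^sup>2 \<le> (hnorm x * hnorm y)\<^sup>2"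
    using r by (simp add: divide_le_eq power_mult_distrib)
  then show ?thesis
    by (rule power2_le_imp_le) simp
qed simp

lemma hnorm_add_power2: "(hnorm (x + y))\<^sup>2 = (hnorm x)\<^sup>2 + 2 * Re (cinner x y) + (hnorm y)\<^sup>2"
proof -
  have "x - (-1) *\<^sub>C y = x + y"
    by (simp add: cvs.scale_minus_left scaleC_one)
  then show ?thesis
    using hnorm_diff_scaleC_power2[of x "-1" y] by simp
qed

lemma hnorm_triangle_ineq: "hnorm (x + y) \<le> hnorm x + hnorm y"
proof -
  have "Re (cinner x y) \<le> hnorm x * hnorm y"
    using cinner_Cauchy_Schwarz[of x y] complex_Re_le_cmod order_trans by blast
  then have "(hnorm (x + y))\<^sup>2 \<le> (hnorm x + hnorm y)\<^sup>2"
    by (simp add: hnorm_add_power2 power2_sum)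
  then show ?thesis
    by (rule power2_le_imp_le) simp
qed

lemma hnorm_sum_le: "hnorm (\<Sum>i\<in>I. f i) \<le> (\<Sum>i\<in>I. hnorm (f i))"
proof (induction I rule: infinite_finite_induct)
  case (insert i I)
  then show ?case
    using hnorm_triangle_ineq[of "f i" "sum f I"] by simp
qed simp_all

lemma parallelogram_law:
  "(hnorm (x + y))\<^sup>2 + (hnorm (x - y))\<^sup>2 = 2 * (hnorm x)\<^sup>2 + 2 * (hnorm y)\<^sup>2"
proof -
  have "(hnorm (x - y))\<^sup>2 = (hnorm x)\<^sup>2 - 2 * Re (cinner x y) + (hnorm y)\<^sup>2"
    using hnorm_diff_scaleC_power2[of x 1 y] by (simp add: scaleC_one)
  then show ?thesis
    using hnorm_add_power2[of x y] by linarith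
qed

section \<open>The Riesz representation theorem\<close>

lemma cinner_eq_zero_if_nearest:
  assumes nearest: "\<And>t. hnorm u \<le> hnorm (u - t *\<^sub>C y)"
  shows "cinner u y = 0"
proof (cases "y = 0")
  case False
  define t where "t = cnj (cinner u y) / complex_of_real ((hnorm y)\<^sup>2)"
  have "(hnorm u)\<^sup>2 \<le> (hnorm (u - t *\<^sub>C y))\<^sup>2"
    using nearest[of t] by (simp add: power_mono)
  also have "\<dots> = (hnorm u)\<^sup>2 - (cmod (cinner u y))\<^sup>2 / (hnorm y)\<^sup>2"
    unfolding t_def by (rule hnorm_diff_projection_power2[OF False])
  finally have "(cmod (cinner u y))\<^sup>2 / (hnorm y)\<^sup>2 \<le> 0"
    by simp
  moreover have "(hnorm y)\<^sup>2 > 0"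
    using False hnorm_pos by simp
  ultimately show ?thesis
    by (simp add: divide_le_0_iff)
qed simp

lemma hnorm_diff_power2_le_if_midpoint_far:
  assumes mid: "\<delta> \<le> (hnorm (w - (1/2 :: complex) *\<^sub>C (a + b)))\<^sup>2"
    and a: "(hnorm (w - a))\<^sup>2 \<le> \<delta> + r" and b: "(hnorm (w - b))\<^sup>2 \<le> \<delta> + s"
  shows "(hnorm (a - b))\<^sup>2 \<le> 2 * r + 2 * s"
proof -
  have "(2 :: complex) *\<^sub>C (w - (1/2 :: complex) *\<^sub>C (a + b)) = (2 :: complex) *\<^sub>C w - (a + b)"
    by (simp add: cvs.scale_right_diff_distrib scaleC_scaleC scaleC_one)
  also have "(2 :: complex) *\<^sub>C w = w + w"
    by (metis one_add_one scaleC_add_left scaleC_one)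
  finally have "(w - a) + (w - b) = (2 :: complex) *\<^sub>C (w - (1/2 :: complex) *\<^sub>C (a + b))"
    by (simp add: algebra_simps)
  then have "(hnorm ((w - a) + (w - b)))\<^sup>2 = 4 * (hnorm (w - (1/2 :: complex) *\<^sub>C (a + b)))\<^sup>2"
    by (simp add: hnorm_scaleC power_mult_distrib)
  moreover have "(w - a) - (w - b) = b - a"
    by simp
  ultimately show ?thesis
    using parallelogram_law[of "w - a" "w - b"] hnorm_minus_commute[of a b] mid a b by simp
qed

lemma hilbert_complete_tendsto:
  fixes X :: "nat \<Rightarrow> 'a::complex_hilbert_space"
  assumes Cauchy: "\<And>m n. hnorm (X m - X n) \<le> b m + b n" and b: "b \<longlonglongrightarrow> 0"
  shows "\<exists>L. (\<lambda>n. hnorm (X n - L)) \<longlonglongrightarrow> 0"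
proof -
  have "\<exists>N. \<forall>m\<ge>N. \<forall>n\<ge>N. hnorm (X m - X n) < e" if "e > 0" for e
  proof -
    obtain N where N: "\<And>n. n \<ge> N \<Longrightarrow> \<bar>b n\<bar> < e / 2"
      using b \<open>e > 0\<close> unfolding LIMSEQ_iff by (metis half_gt_zero real_norm_def diff_zero)
    have "hnorm (X m - X n) < e" if "m \<ge> N" "n \<ge> N" for m n
      using Cauchy[of m n] N[OF \<open>m \<ge> N\<close>] N[OF \<open>n \<ge> N\<close>] by linarith
    then show ?thesis
      by blast
  qed
  then obtain L where "\<forall>e>0. \<exists>N. \<forall>n\<ge>N. hnorm (X n - L) < e"
    using hilbert_complete[of X] unfolding hnorm_def by blast
  then show ?thesis
    by (auto simp: LIMSEQ_iff)
qed

lemma hnorm_diff_limit_le: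
  assumes L: "(\<lambda>n. hnorm (X n - L)) \<longlonglongrightarrow> 0"
    and le: "\<And>n. hnorm (w - X n) \<le> c n" and c: "c \<longlonglongrightarrow> c0"
  shows "hnorm (w - L) \<le> c0"
proof (rule tendsto_le[OF trivial_limit_sequentially])
  show "(\<lambda>n. c n + hnorm (X n - L)) \<longlonglongrightarrow> c0"
    using tendsto_add[OF c L] by simp
  have "hnorm (w - L) \<le> c n + hnorm (X n - L)" for n
    using hnorm_triangle_ineq[of "w - X n" "X n - L"] le[of n] by simp
  then show "\<forall>\<^sub>F n in sequentially. hnorm (w - L) \<le> c n + hnorm (X n - L)"
    by simp
qed simp

lemma minimizing_sequence_convergent:
  fixes X :: "nat \<Rightarrow> 'a::complex_hilbert_space"
  assumes midpoint: "\<And>a b. a \<in> M \<Longrightarrow> b \<in> M \<Longrightarrow> (1/2 :: complex) *\<^sub>C (a + b) \<in> M"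
    and lower: "\<And>m. m \<in> M \<Longrightarrow> \<delta> \<le> (hnorm (w - m))\<^sup>2"
    and X_in: "\<And>k. X k \<in> M" and X_near: "\<And>k. (hnorm (w - X k))\<^sup>2 \<le> \<delta> + 1 / real (Suc k)"
  shows "\<exists>L. (\<lambda>n. hnorm (X n - L)) \<longlonglongrightarrow> 0"
proof (rule hilbert_complete_tendsto)
  define b where "b k = sqrt (2 * (1 / real (Suc k)))" for k
  show "hnorm (X k - X l) \<le> b k + b l" for k l
  proof -
    have "(hnorm (X k - X l))\<^sup>2 \<le> 2 * (1 / real (Suc k)) + 2 * (1 / real (Suc l))"
      by (rule hnorm_diff_power2_le_if_midpoint_far[OF lower[OF midpoint[OF X_in X_in]] X_near X_near])
    then have "hnorm (X k - X l) \<le> sqrt (2 * (1 / real (Suc k)) + 2 * (1 / real (Suc l)))"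
      by (rule real_le_rsqrt)
    also have "\<dots> \<le> b k + b l"
      unfolding b_def by (rule sqrt_add_le_add_sqrt) simp_all
    finally show ?thesis .
  qed
  have "(\<lambda>k. 1 / real (Suc k)) \<longlonglongrightarrow> 0"
    using LIMSEQ_inverse_real_of_nat by (simp add: inverse_eq_divide)
  then show "b \<longlonglongrightarrow> 0"
    unfolding b_def using tendsto_real_sqrt[OF tendsto_mult_right_zero[of _ sequentially 2]]
    by (simp del: times_divide_eq_right)
qed

lemma nearest_point_exists:
  fixes M :: "'a::complex_hilbert_space set"
  assumes nonempty: "M \<noteq> {}"
    and midpoint: "\<And>a b. a \<in> M \<Longrightarrow> b \<in> M \<Longrightarrow> (1/2 :: complex) *\<^sub>C (a + b) \<in> M"
    and closed: "\<And>X x. (\<And>n. X n \<in> M) \<Longrightarrow> (\<lambda>n. hnorm (X n - x)) \<longlonglongrightarrow> 0 \<Longrightarrow> x \<in> M"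
  shows "\<exists>L\<in>M. \<forall>m\<in>M. hnorm (w - L) \<le> hnorm (w - m)"
proof -
  define D where "D = {(hnorm (w - m))\<^sup>2 | m. m \<in> M}"
  define \<delta> where "\<delta> = Inf D"
  have D_nonempty: "D \<noteq> {}"
    using nonempty unfolding D_def by blast
  have \<delta>_le: "\<delta> \<le> (hnorm (w - m))\<^sup>2" if "m \<in> M" for m
  proof -
    have "bdd_below D"
      unfolding D_def by (rule bdd_belowI[of _ 0]) auto
    then show ?thesis
      unfolding \<delta>_def using that by (intro cInf_lower) (auto simp: D_def)
  qed
  have "\<exists>m\<in>M. (hnorm (w - m))\<^sup>2 < \<delta> + 1 / real (Suc k)" for k
  proof -
    have "Inf D < \<delta> + 1 / real (Suc k)"
      unfolding \<delta>_def by simp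
    from cInf_lessD[OF D_nonempty this] show ?thesis
      unfolding D_def by blast
  qed
  then obtain X where X_in: "\<And>k. X k \<in> M"
    and X_near: "\<And>k. (hnorm (w - X k))\<^sup>2 < \<delta> + 1 / real (Suc k)"
    by metis
  obtain L where L: "(\<lambda>n. hnorm (X n - L)) \<longlonglongrightarrow> 0"
    using minimizing_sequence_convergent[OF midpoint \<delta>_le X_in less_imp_le[OF X_near]] by blast
  have "hnorm (w - L) \<le> sqrt \<delta>"
  proof (rule hnorm_diff_limit_le[OF L])
    show "hnorm (w - X n) \<le> sqrt (\<delta> + 1 / real (Suc n))" for n
      using X_near[of n] by (intro real_le_rsqrt) simp
    have "(\<lambda>k. 1 / real (Suc k)) \<longlonglongrightarrow> 0"
      using LIMSEQ_inverse_real_of_nat by (simp add: inverse_eq_divide)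
    then show "(\<lambda>n. sqrt (\<delta> + 1 / real (Suc n))) \<longlonglongrightarrow> sqrt \<delta>"
      using tendsto_real_sqrt[OF tendsto_add[OF tendsto_const]] by fastforce
  qed
  moreover have "sqrt \<delta> \<le> hnorm (w - m)" if "m \<in> M" for m
    using real_sqrt_le_mono[OF \<delta>_le[OF that]] by simp
  ultimately show ?thesis
    using closed[OF X_in L] by (meson order_trans)
qed

lemma exists_orthogonal_to_kernel:
  fixes g :: "'a::complex_hilbert_space \<Rightarrow> complex"
  assumes add: "\<And>x y. g (x + y) = g x + g y" and scale: "\<And>a x. g (a *\<^sub>C x) = a * g x"
    and bounded: "\<And>x. cmod (g x) \<le> K * hnorm x" and "g w \<noteq> 0"
  shows "\<exists>u. g u \<noteq> 0 \<and> (\<forall>y. g y = 0 \<longrightarrow> cinner u y = 0)"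
proof -
  interpret g: additive g
    by unfold_locales (rule add)
  have "\<exists>L\<in>{m. g m = 0}. \<forall>m\<in>{m. g m = 0}. hnorm (w - L) \<le> hnorm (w - m)"
  proof (rule nearest_point_exists)
    show "{m. g m = 0} \<noteq> {}"
      using g.zero by blast
    show "(1/2 :: complex) *\<^sub>C (a + b) \<in> {m. g m = 0}"
      if "a \<in> {m. g m = 0}" "b \<in> {m. g m = 0}" for a b
      using that by (simp add: add scale)
    fix X x
    assume X: "\<And>n. X n \<in> {m. g m = 0}" and lim: "(\<lambda>n. hnorm (X n - x)) \<longlonglongrightarrow> 0"
    have "cmod (g x) \<le> K * hnorm (X n - x)" for n
      using bounded[of "x - X n"] X[of n] by (simp add: g.diff hnorm_minus_commute)
    then have "cmod (g x) \<le> 0"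
      by (intro tendsto_le[OF trivial_limit_sequentially tendsto_mult_right_zero[OF lim, of K] tendsto_const])
        simp
    then show "x \<in> {m. g m = 0}"
      by simp
  qed
  then obtain L where gL: "g L = 0"
    and nearest: "\<And>m. g m = 0 \<Longrightarrow> hnorm (w - L) \<le> hnorm (w - m)"
    by blast
  have "cinner (w - L) y = 0" if "g y = 0" for y
  proof (rule cinner_eq_zero_if_nearest)
    fix t
    have "g (L + t *\<^sub>C y) = 0"
      by (simp add: add scale gL that)
    then have "hnorm (w - L) \<le> hnorm (w - (L + t *\<^sub>C y))"
      by (rule nearest)
    then show "hnorm (w - L) \<le> hnorm (w - L - t *\<^sub>C y)"
      by (simp add: diff_diff_eq)
  qed
  moreover have "g (w - L) \<noteq> 0"
    using \<open>g w \<noteq> 0\<close> gL by (simp add: g.diff)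
  ultimately show ?thesis
    by blast
qed

lemma Riesz_representation:
  fixes g :: "'a::complex_hilbert_space \<Rightarrow> complex"
  assumes add: "\<And>x y. g (x + y) = g x + g y" and scale: "\<And>a x. g (a *\<^sub>C x) = a * g x"
    and bounded: "\<And>x. cmod (g x) \<le> K * hnorm x"
  shows "\<exists>z. \<forall>y. g y = cinner z y"
proof (cases "\<forall>y. g y = 0")
  case True
  then show ?thesis
    by (intro exI[of _ 0]) simp
next
  case False
  then obtain u where gu: "g u \<noteq> 0" and orth: "\<And>y. g y = 0 \<Longrightarrow> cinner u y = 0"
    using exists_orthogonal_to_kernel[OF add scale bounded] by blast
  interpret g: additive g
    by unfold_locales (rule add)
  have "u \<noteq> 0"
    using gu g.zero by auto
  then have uu: "cinner u u \<noteq> 0"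
    by (simp add: cinner_eq_zero)
  show ?thesis
  proof (intro exI allI)
    fix y
    have "g ((g u) *\<^sub>C y - (g y) *\<^sub>C u) = 0"
      by (simp add: g.diff scale mult.commute)
    then have "cinner u ((g u) *\<^sub>C y - (g y) *\<^sub>C u) = 0"
      by (rule orth)
    then have "g u * cinner u y = g y * cinner u u"
      by (simp add: cinner_diff_right cinner_scaleC_right)
    then have "g y = (g u / cinner u u) * cinner u y"
      using uu by (simp add: field_simps)
    then show "g y = cinner (cnj (g u / cinner u u) *\<^sub>C u) y"
      by (simp add: cinner_scaleC_left)
  qed
qed

lemma BH_add: "T \<in> BH \<Longrightarrow> T (x + y) = T x + T y"
  by (simp add: BH_def bounded_op_def)

lemma BH_scaleC: "T \<in> BH \<Longrightarrow> T (a *\<^sub>C x) = a *\<^sub>C T x"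
  by (simp add: BH_def bounded_op_def)

lemma BH_zero: "T \<in> BH \<Longrightarrow> T 0 = 0"
  using BH_scaleC[of T 0 0] by simp

lemma BH_sum: "T \<in> BH \<Longrightarrow> T (\<Sum>i\<in>I. f i) = (\<Sum>i\<in>I. T (f i))"
  by (induction I rule: infinite_finite_induct) (simp_all add: BH_add BH_zero)

lemma BH_bounded: "T \<in> BH \<Longrightarrow> \<exists>K. \<forall>x. hnorm (T x) \<le> K * hnorm x"
  by (simp add: BH_def bounded_op_def)

lemma BH_I:
  assumes "\<And>x y. T (x + y) = T x + T y" and "\<And>a x. T (a *\<^sub>C x) = a *\<^sub>C T x"
    and "\<And>x. hnorm (T x) \<le> K * hnorm x"
  shows "T \<in> BH"
  using assms unfolding BH_def bounded_op_def by blast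

lemma id_BH: "id \<in> BH"
  by (rule BH_I[where K = 1]) auto

lemma sesquilinear_representation:
  fixes B :: "'a::complex_hilbert_space \<Rightarrow> 'a \<Rightarrow> complex"
  assumes add_right: "\<And>x y z. B x (y + z) = B x y + B x z"
    and scale_right: "\<And>x a y. B x (a *\<^sub>C y) = a * B x y"
    and add_left: "\<And>x y z. B (x + y) z = B x z + B y z"
    and scale_left: "\<And>a x y. B (a *\<^sub>C x) y = cnj a * B x y"
    and bounded: "\<And>x y. cmod (B x y) \<le> K * hnorm x * hnorm y"
  shows "\<exists>S\<in>BH. \<forall>x y. B x y = cinner (S x) y"
proof -
  have "\<exists>z. \<forall>y. B x y = cinner z y" for x
    by (rule Riesz_representation[where K = "K * hnorm x"]) (use add_right scale_right bounded in auto)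
  then obtain S where S: "\<And>x y. B x y = cinner (S x) y"
    by metis
  have "S \<in> BH"
  proof (rule BH_I)
    show "S (x + y) = S x + S y" for x y
      by (rule cinner_eq_imp_eq_left) (simp add: S[symmetric] add_left cinner_add_left)
    show "S (a *\<^sub>C x) = a *\<^sub>C S x" for a x
      by (rule cinner_eq_imp_eq_left) (simp add: S[symmetric] scale_left cinner_scaleC_left)
    show "hnorm (S x) \<le> K * hnorm x" for x
    proof (cases "S x = 0")
      case True
      have "0 \<le> K * hnorm x * hnorm x"
        using bounded[of x x] norm_ge_zero order_trans by blast
      then show ?thesis
        using True by (cases "x = 0") (auto simp: zero_le_mult_iff hnorm_pos)
    next
      case False
      have "(hnorm (S x))\<^sup>2 = Re (B x (S x))"
        by (simp add: S hnorm_power2)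
      also have "\<dots> \<le> cmod (B x (S x))"
        by (rule complex_Re_le_cmod)
      also have "\<dots> \<le> K * hnorm x * hnorm (S x)"
        by (rule bounded)
      finally show ?thesis
        using hnorm_pos[OF False] by (simp add: power2_eq_square)
    qed
  qed
  then show ?thesis
    using S by blast
qed

lemma cinner_adj:
  fixes T :: "'a::complex_hilbert_space op"
  assumes T: "T \<in> BH"
  shows "cinner (T x) y = cinner x (adj T y)"
proof -
  obtain K where K: "\<And>x. hnorm (T x) \<le> K * hnorm x"
    using BH_bounded[OF T] by blast
  have "\<exists>S\<in>BH. \<forall>y x. cinner y (T x) = cinner (S y) x"
  proof (rule sesquilinear_representation[where K = K])
    show "cmod (cinner y (T x)) \<le> K * hnorm y * hnorm x" for y x
      using cinner_Cauchy_Schwarz[of y "T x"] K[of x] mult_left_mono[OF K[of x] hnorm_nonneg[of y]]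
      by (simp add: mult_ac)
  qed (simp_all add: cinner_add_left cinner_add_right cinner_scaleC_left cinner_scaleC_right
        BH_add[OF T] BH_scaleC[OF T])
  then obtain S where S: "\<And>x y. cinner (T x) y = cinner x (S y)"
    by (metis cinner_conj)
  have "\<exists>!S. \<forall>x y. cinner (T x) y = cinner x (S y)"
  proof (rule ex1I[of _ S])
    fix S' assume S': "\<forall>x y. cinner (T x) y = cinner x (S' y)"
    show "S' = S"
      by (rule ext, rule cinner_eq_imp_eq_right) (use S S' in metis)
  qed (use S in blast)
  from theI'[OF this] show ?thesis
    unfolding adj_def by blast
qed

lemma bdd_above_opnorm_set:
  assumes "T \<in> BH"
  shows "bdd_above {hnorm (T x) | x. hnorm x \<le> 1}"
proof -
  obtain K where K: "\<And>x. hnorm (T x) \<le> K * hnorm x"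
    using BH_bounded[OF assms] by blast
  show ?thesis
  proof (rule bdd_aboveI[where M = "max K 0"])
    fix r assume "r \<in> {hnorm (T x) | x. hnorm x \<le> 1}"
    then obtain x where x: "r = hnorm (T x)" "hnorm x \<le> 1"
      by blast
    have "K * hnorm x \<le> max K 0 * hnorm x"
      by (rule mult_right_mono) auto
    also have "\<dots> \<le> max K 0"
      using x mult_left_mono[of "hnorm x" 1 "max K 0"] by simp
    finally show "r \<le> max K 0"
      using K[of x] x by simp
  qed
qed

lemma
  fixes T :: "'a::complex_inner_space op"
  assumes T: "T \<in> BH"
  shows opnorm_nonneg: "0 \<le> opnorm T"
    and hnorm_le_opnorm: "hnorm (T x) \<le> opnorm T * hnorm x"
proof -
  have "hnorm (T 0) \<le> opnorm T"
    unfolding opnorm_def by (rule cSup_upper[OF _ bdd_above_opnorm_set[OF T]]) auto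
  then show "0 \<le> opnorm T"
    using BH_zero[OF T] by simp
  show "hnorm (T x) \<le> opnorm T * hnorm x"
  proof (cases "x = 0")
    case True
    then show ?thesis
      using BH_zero[OF T] by simp
  next
    case False
    define c where "c = hnorm x"
    have c: "c > 0"
      using False hnorm_pos c_def by simp
    define x' where "x' = complex_of_real (1 / c) *\<^sub>C x"
    have "hnorm x' = 1"
      unfolding x'_def using c False by (simp add: hnorm_scaleC c_def norm_divide)
    then have "hnorm (T x') \<le> opnorm T"
      unfolding opnorm_def by (intro cSup_upper[OF _ bdd_above_opnorm_set[OF T]]) auto
    moreover have "hnorm (T x') = hnorm (T x) / c"
      unfolding x'_def using c by (simp add: BH_scaleC[OF T] hnorm_scaleC norm_divide)
    ultimately show ?thesis
      using c by (simp add: c_def divide_le_eq mult.commute)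
  qed
qed

lemma opnorm_le:
  assumes "0 \<le> c" and "\<And>x. hnorm (T x) \<le> c * hnorm x"
  shows "opnorm T \<le> c"
  unfolding opnorm_def
proof (rule cSup_least)
  show "{hnorm (T x) |x. hnorm x \<le> 1} \<noteq> {}"
    by (auto intro!: exI[of _ 0])
  fix r assume "r \<in> {hnorm (T x) |x. hnorm x \<le> 1}"
  then obtain x where x: "r = hnorm (T x)" "hnorm x \<le> 1"
    by blast
  then show "r \<le> c"
    using assms(2)[of x] mult_left_mono[OF x(2) assms(1)] by simp
qed

lemma opnorm_id:
  assumes "\<exists>x::'a::complex_inner_space. x \<noteq> 0"
  shows "opnorm (id :: 'a op) = 1"
proof (rule antisym)
  show "opnorm (id :: 'a op) \<le> 1"
    by (rule opnorm_le) auto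
  obtain x :: 'a where x: "x \<noteq> 0"
    using assms by blast
  have "hnorm x \<le> opnorm (id :: 'a op) * hnorm x"
    using hnorm_le_opnorm[OF id_BH, of x] by simp
  then show "1 \<le> opnorm (id :: 'a op)"
    using hnorm_pos[OF x] by simp
qed

lemma op_plus_BH: "S \<in> BH \<Longrightarrow> T \<in> BH \<Longrightarrow> op_plus S T \<in> BH"
proof (rule BH_I[where K = "opnorm S + opnorm T"])
  assume S: "S \<in> BH" and T: "T \<in> BH"
  show "op_plus S T (x + y) = op_plus S T x + op_plus S T y" for x y
    by (simp add: op_plus_def BH_add[OF S] BH_add[OF T] algebra_simps)
  show "op_plus S T (a *\<^sub>C x) = a *\<^sub>C op_plus S T x" for a x
    by (simp add: op_plus_def BH_scaleC[OF S] BH_scaleC[OF T] scaleC_add_right)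
  show "hnorm (op_plus S T x) \<le> (opnorm S + opnorm T) * hnorm x" for x
    using hnorm_triangle_ineq[of "S x" "T x"] hnorm_le_opnorm[OF S, of x] hnorm_le_opnorm[OF T, of x]
    by (simp add: op_plus_def algebra_simps)
qed

lemma op_scale_BH: "T \<in> BH \<Longrightarrow> op_scale a T \<in> BH"
proof (rule BH_I[where K = "cmod a * opnorm T"])
  assume T: "T \<in> BH"
  show "op_scale a T (x + y) = op_scale a T x + op_scale a T y" for x y
    by (simp add: op_scale_def BH_add[OF T] scaleC_add_right)
  show "op_scale a T (b *\<^sub>C x) = b *\<^sub>C op_scale a T x" for b x
    by (simp add: op_scale_def BH_scaleC[OF T] scaleC_scaleC mult.commute)
  show "hnorm (op_scale a T x) \<le> (cmod a * opnorm T) * hnorm x" for x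
    using hnorm_le_opnorm[OF T, of x]
    by (simp add: op_scale_def hnorm_scaleC mult.assoc mult_left_mono)
qed

lemma cond_exp_if_contractive_retraction:
  fixes \<Psi> :: "'a::complex_inner_space op \<Rightarrow> 'a op"
  assumes nontriv: "\<exists>x::'a. x \<noteq> 0" and "S \<subseteq> BH" and "M \<subseteq> S" and "id \<in> M"
    and into: "\<And>T. T \<in> S \<Longrightarrow> \<Psi> T \<in> M" and fixed: "\<And>T. T \<in> M \<Longrightarrow> \<Psi> T = T"
    and add: "\<And>T1 T2. T1 \<in> S \<Longrightarrow> T2 \<in> S \<Longrightarrow> \<Psi> (op_plus T1 T2) = op_plus (\<Psi> T1) (\<Psi> T2)"
    and scale: "\<And>a T. T \<in> S \<Longrightarrow> \<Psi> (op_scale a T) = op_scale a (\<Psi> T)"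
    and contractive: "\<And>T. T \<in> S \<Longrightarrow> opnorm (\<Psi> T) \<le> opnorm T"
  shows "cond_exp \<Psi> S M"
  unfolding cond_exp_def
proof (intro conjI ballI allI)
  show "\<Psi> ` S = M"
    using into fixed \<open>M \<subseteq> S\<close> by (auto intro: rev_image_eqI)
  show "\<Psi> (\<Psi> T) = \<Psi> T" if "T \<in> S" for T
    using fixed into that by blast
  show "Sup {opnorm (\<Psi> T) | T. T \<in> S \<and> opnorm T \<le> 1} = 1"
  proof (rule cSup_eq_maximum)
    show "1 \<in> {opnorm (\<Psi> T) | T. T \<in> S \<and> opnorm T \<le> 1}"
      using \<open>id \<in> M\<close> \<open>M \<subseteq> S\<close> fixed opnorm_id[OF nontriv] by force
    show "r \<le> 1" if "r \<in> {opnorm (\<Psi> T) | T. T \<in> S \<and> opnorm T \<le> 1}" for r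
      using that contractive by force
  qed
qed (use add scale in blast)+

section \<open>Limits along ultrafilters\<close>

lemma ultrafilter_tendsto_compact:
  fixes f :: "'a \<Rightarrow> 'b::topological_space"
  assumes nonbot: "F \<noteq> bot" and ultra: "\<And>P. eventually P F \<or> eventually (\<lambda>x. \<not> P x) F"
    and K: "compact K" and f_in_K: "eventually (\<lambda>x. f x \<in> K) F"
  shows "\<exists>L. (f \<longlongrightarrow> L) F"
proof -
  have "filtermap f F \<noteq> bot"
    using nonbot by (simp add: filtermap_bot_iff)
  moreover have "eventually (\<lambda>z. z \<in> K) (filtermap f F)"
    using f_in_K by (simp add: eventually_filtermap)
  ultimately obtain L where L: "inf (nhds L) (filtermap f F) \<noteq> bot"
    using K unfolding compact_filter by blast
  have "(f \<longlongrightarrow> L) F"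
  proof (rule topological_tendstoI)
    fix S assume "open S" "L \<in> S"
    show "eventually (\<lambda>x. f x \<in> S) F"
    proof (rule ccontr)
      assume "\<not> eventually (\<lambda>x. f x \<in> S) F"
      then have "eventually (\<lambda>z. z \<notin> S) (filtermap f F)"
        using ultra by (simp add: eventually_filtermap) blast
      moreover have "eventually (\<lambda>z. z \<in> S) (nhds L)"
        using \<open>open S\<close> \<open>L \<in> S\<close> by (rule eventually_nhds_in_open)
      ultimately have "eventually (\<lambda>z. False) (inf (nhds L) (filtermap f F))"
        unfolding eventually_inf by blast
      then show False
        using L by (simp add: eventually_False)
    qed
  qed
  then show ?thesis
    by blast
qed

lemma free_ultrafilter_tendsto_exists:
  fixes f :: "nat \<Rightarrow> complex"
  assumes "free_ultrafilter p" and "\<And>n. cmod (f n) \<le> M"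
  shows "\<exists>L. (f \<longlongrightarrow> L) p"
  using assms unfolding free_ultrafilter_def
  by (intro ultrafilter_tendsto_compact[OF _ _ compact_cball[of 0 M]])
    (auto simp: dist_norm intro: always_eventually)

lemma free_ultrafilter_le_sequentially:
  assumes "free_ultrafilter p"
  shows "p \<le> sequentially"
  unfolding le_sequentially
proof
  fix N
  have "\<forall>k\<in>{..<N}. eventually (\<lambda>n. n \<noteq> k) p"
    using assms unfolding free_ultrafilter_def by blast
  then have "eventually (\<lambda>n. \<forall>k\<in>{..<N}. n \<noteq> k) p"
    by (simp add: eventually_ball_finite)
  then show "eventually (\<lambda>n. N \<le> n) p"
    by (rule eventually_mono) (auto intro: leI)
qed

text \<open>Finitely many vectors, viewed as square-summable sequences supported at index \<open>0\<close>.\<close>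
lemma ultraweak_closure_approx:
  fixes X :: "'a::complex_inner_space op" and x y :: "nat \<Rightarrow> 'a" and k :: nat
  assumes X: "X \<in> ultraweak_closure A" and "e > 0"
  shows "\<exists>a\<in>A. \<forall>j<k. cmod (cinner (X (x j)) (y j) - cinner (a (x j)) (y j)) < e"
proof -
  define xs where "xs j i = (if i = 0 then x j else 0)" for j i :: nat
  define ys where "ys j i = (if i = 0 then y j else 0)" for j i :: nat
  have summable_single: "summable (\<lambda>i::nat. (hnorm (if i = 0 then z else 0))\<^sup>2)" for z :: 'a
  proof -
    have "(\<lambda>i::nat. (hnorm (if i = 0 then z else 0))\<^sup>2) = (\<lambda>i. if i = 0 then (hnorm z)\<^sup>2 else 0)"
      by auto
    then show ?thesis
      using sums_single[of 0 "\<lambda>_. (hnorm z)\<^sup>2"] sums_summable by metis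
  qed
  have series_single: "(\<Sum>i. cinner (S (xs j i)) (ys j i) - cinner (a (xs j i)) (ys j i))
      = cinner (S (x j)) (y j) - cinner (a (x j)) (y j)" for S a :: "'a op" and j
  proof -
    have "(\<lambda>i. cinner (S (xs j i)) (ys j i) - cinner (a (xs j i)) (ys j i))
        = (\<lambda>i. if i = 0 then cinner (S (x j)) (y j) - cinner (a (x j)) (y j) else 0)"
      by (auto simp: xs_def ys_def)
    then show ?thesis
      using sums_single[of 0 "\<lambda>_. cinner (S (x j)) (y j) - cinner (a (x j)) (y j)"]
      by (simp add: sums_iff)
  qed
  have "\<forall>j<k. summable (\<lambda>i. (hnorm (xs j i))\<^sup>2) \<and> summable (\<lambda>i. (hnorm (ys j i))\<^sup>2)"
    unfolding xs_def ys_def using summable_single by blast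
  with X \<open>e > 0\<close> obtain a where "a \<in> A"
    and "\<forall>j<k. cmod (\<Sum>i. cinner (X (xs j i)) (ys j i) - cinner (a (xs j i)) (ys j i)) < e"
    unfolding ultraweak_closure_def by blast
  then show ?thesis
    unfolding series_single by blast
qed

lemma ultraweak_closure_subset_wot_closure:
  fixes A :: "'a::complex_inner_space op set"
  shows "ultraweak_closure A \<subseteq> wot_closure A"
proof
  fix X assume X: "X \<in> ultraweak_closure A"
  show "X \<in> wot_closure A"
    unfolding wot_closure_def
  proof (intro CollectI conjI allI impI)
    show "X \<in> BH"
      using X unfolding ultraweak_closure_def by blast
    fix F :: "('a \<times> 'a) set" and e :: real
    assume "finite F" and "e > 0"
    obtain h and k :: nat where h: "bij_betw h {..<k} F"
      using ex_bij_betw_nat_finite[OF \<open>finite F\<close>] unfolding atLeast0LessThan by blast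
    obtain a where "a \<in> A"
      and close: "\<forall>j<k. cmod (cinner (X (fst (h j))) (snd (h j)) - cinner (a (fst (h j))) (snd (h j))) < e"
      using ultraweak_closure_approx[OF X \<open>e > 0\<close>, where x = "fst \<circ> h" and y = "snd \<circ> h" and k = k]
      by auto
    moreover have "\<forall>(x, y)\<in>F. cmod (cinner (X x) y - cinner (a x) y) < e"
    proof (clarify)
      fix x y assume "(x, y) \<in> F"
      then obtain j where "j < k" and "h j = (x, y)"
        using h by (metis bij_betw_iff_bijections lessThan_iff)
      moreover have "cmod (cinner (X (fst (h j))) (snd (h j)) - cinner (a (fst (h j))) (snd (h j))) < e"
        using close \<open>j < k\<close> by blast
      ultimately show "cmod (cinner (X x) y - cinner (a x) y) < e"
        by simp
    qed
    ultimately show "\<exists>a\<in>A. \<forall>(x, y)\<in>F. cmod (cinner (X x) y - cinner (a x) y) < e"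
      by blast
  qed
qed

lemma commute_wot_closure:
  fixes C :: "'a::complex_hilbert_space op"
  assumes C: "C \<in> BH" and commute: "\<And>a. a \<in> A \<Longrightarrow> C \<circ> a = a \<circ> C"
    and X: "X \<in> wot_closure A"
  shows "C \<circ> X = X \<circ> C"
proof (rule ext, rule cinner_eq_imp_eq_left)
  fix x y
  define D where "D = cinner (C (X x)) y - cinner (X (C x)) y"
  have small: "cmod D < 2 * e" if "e > 0" for e
  proof -
    have "\<And>F. finite F \<Longrightarrow> \<exists>a\<in>A. \<forall>(u, v)\<in>F. cmod (cinner (X u) v - cinner (a u) v) < e"
      using X \<open>e > 0\<close> unfolding wot_closure_def by blast
    from this[of "{(x, adj C y), (C x, y)}"] obtain a where a: "a \<in> A"
      and close: "cmod (cinner (X x) (adj C y) - cinner (a x) (adj C y)) < e"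
        "cmod (cinner (X (C x)) y - cinner (a (C x)) y) < e"
      by auto
    have "cinner (a x) (adj C y) = cinner (a (C x)) y"
      using fun_cong[OF commute[OF a], of x] by (simp flip: cinner_adj[OF C])
    then have "D = (cinner (X x) (adj C y) - cinner (a x) (adj C y))
        - (cinner (X (C x)) y - cinner (a (C x)) y)"
      unfolding D_def cinner_adj[OF C] by simp
    then have "cmod D \<le> cmod (cinner (X x) (adj C y) - cinner (a x) (adj C y))
        + cmod (cinner (X (C x)) y - cinner (a (C x)) y)"
      by (simp add: norm_triangle_ineq4)
    then show ?thesis
      using close by simp
  qed
  have "D = 0"
  proof (rule ccontr)
    assume "D \<noteq> 0"
    then show False
      using small[of "cmod D / 2"] by simp
  qed
  then show "cinner ((C \<circ> X) x) y = cinner ((X \<circ> C) x) y"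
    unfolding D_def by simp
qed

lemma star_subalgebra_sum:
  assumes S: "star_subalgebra S" and "finite I" and f: "\<And>i. i \<in> I \<Longrightarrow> f i \<in> S"
  shows "(\<lambda>x. \<Sum>i\<in>I. f i x) \<in> S"
  using \<open>finite I\<close> f
proof (induction I rule: finite_induct)
  case empty
  have "op_scale 0 id \<in> S"
    using S unfolding star_subalgebra_def by blast
  then show ?case
    by (simp add: op_scale_def)
next
  case (insert i I)
  then have "op_plus (f i) (\<lambda>x. \<Sum>i\<in>I. f i x) \<in> S"
    using S unfolding star_subalgebra_def by blast
  then show ?case
    using insert by (simp add: op_plus_def)
qed

lemma ultraweak_closure_subset: "A \<subseteq> BH \<Longrightarrow> A \<subseteq> ultraweak_closure A"
proof
  fix X assume "A \<subseteq> BH" and "X \<in> A"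
  then show "X \<in> ultraweak_closure A"
    unfolding ultraweak_closure_def by (intro CollectI conjI allI impI bexI[of _ X]) auto
qed

section \<open>Averaging over a finite unitary group\<close>

lemma finite_unitary_group_mono:
  "finite_unitary_group G A \<Longrightarrow> A \<subseteq> B \<Longrightarrow> finite_unitary_group G B"
  unfolding finite_unitary_group_def unitaries_def by blast

locale unitary_averaging =
  fixes G :: "'a::complex_hilbert_space op set"
  assumes group: "finite_unitary_group G BH"
begin

lemma finite_group: "finite G"
  and id_mem: "id \<in> G"
  and comp_mem: "V \<in> G \<Longrightarrow> W \<in> G \<Longrightarrow> V \<circ> W \<in> G"
  and adj_mem: "V \<in> G \<Longrightarrow> adj V \<in> G"
  and mem_BH: "V \<in> G \<Longrightarrow> V \<in> BH"
  and comp_adj: "V \<in> G \<Longrightarrow> V \<circ> adj V = id"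
  and adj_comp: "V \<in> G \<Longrightarrow> adj V \<circ> V = id"
  using group unfolding finite_unitary_group_def unitaries_def by blast+

lemma apply_adj: "V \<in> G \<Longrightarrow> V (adj V x) = x"
  and adj_apply: "V \<in> G \<Longrightarrow> adj V (V x) = x"
  using comp_adj adj_comp by (metis comp_apply id_apply)+

lemma card_pos: "0 < card G"
  using finite_group id_mem card_gt_0_iff by blast

lemma hnorm_apply: "V \<in> G \<Longrightarrow> hnorm (V x) = hnorm x"
  using cinner_adj[OF mem_BH, of V x "V x"] adj_apply by (simp add: hnorm_def)

lemma average_add: "T \<in> BH \<Longrightarrow> unitary_average G T (x + y) = unitary_average G T x + unitary_average G T y"
  unfolding unitary_average_def
  by (simp add: BH_add mem_BH adj_mem sum.distrib scaleC_add_right)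

lemma average_scaleC: "T \<in> BH \<Longrightarrow> unitary_average G T (a *\<^sub>C x) = a *\<^sub>C unitary_average G T x"
  unfolding unitary_average_def
  by (simp add: BH_scaleC mem_BH adj_mem scaleC_scaleC mult.commute flip: cvs.scale_sum_right)

lemma hnorm_average_le:
  assumes T: "T \<in> BH"
  shows "hnorm (unitary_average G T x) \<le> opnorm T * hnorm x"
proof -
  have "hnorm (\<Sum>V\<in>G. V (T (adj V x))) \<le> (\<Sum>V\<in>G. hnorm (V (T (adj V x))))"
    by (rule hnorm_sum_le)
  also have "\<dots> \<le> (\<Sum>V\<in>G. opnorm T * hnorm x)"
  proof (rule sum_mono)
    fix V assume "V \<in> G"
    then show "hnorm (V (T (adj V x))) \<le> opnorm T * hnorm x"
      using hnorm_le_opnorm[OF T, of "adj V x"] by (simp add: hnorm_apply adj_mem)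
  qed
  also have "\<dots> = real (card G) * (opnorm T * hnorm x)"
    by simp
  finally show ?thesis
    using card_pos unfolding unitary_average_def
    by (simp add: hnorm_scaleC norm_divide divide_le_eq mult.commute)
qed

lemma average_BH: "T \<in> BH \<Longrightarrow> unitary_average G T \<in> BH"
  by (rule BH_I[where K = "opnorm T"]) (simp_all add: average_add average_scaleC hnorm_average_le)

lemma average_op_plus:
  "unitary_average G (op_plus S T) = op_plus (unitary_average G S) (unitary_average G T)"
  unfolding unitary_average_def op_plus_def
  by (simp add: BH_add mem_BH sum.distrib scaleC_add_right)

lemma average_op_scale: "unitary_average G (op_scale a T) = op_scale a (unitary_average G T)"
  unfolding unitary_average_def op_scale_def
  by (simp add: BH_scaleC mem_BH scaleC_scaleC mult.commute flip: cvs.scale_sum_right)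

text \<open>Left translation \<open>V \<mapsto> W V\<close> permutes the group.\<close>
lemma average_commute:
  assumes W: "W \<in> G"
  shows "W (unitary_average G T x) = unitary_average G T (W x)"
proof -
  have adj_shift: "adj (adj W \<circ> V) x = adj V (W x)" if V: "V \<in> G" for V
  proof -
    have "adj (adj W \<circ> V) x = adj (adj W \<circ> V) ((adj W \<circ> V) (adj V (W x)))"
      by (simp add: apply_adj[OF V] adj_apply[OF W])
    also have "\<dots> = adj V (W x)"
      by (rule adj_apply[OF comp_mem[OF adj_mem[OF W] V]])
    finally show ?thesis .
  qed
  have "(\<Sum>V\<in>G. V (T (adj V (W x)))) = (\<Sum>V\<in>G. W (V (T (adj V x))))"
  proof (rule sum.reindex_bij_witness[where i = "\<lambda>V. W \<circ> V" and j = "\<lambda>V. adj W \<circ> V"])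
    fix V assume V: "V \<in> G"
    show "W \<circ> (adj W \<circ> V) = V" "adj W \<circ> (W \<circ> V) = V"
      using comp_adj[OF W] adj_comp[OF W] by (simp_all flip: comp_assoc)
    show "adj W \<circ> V \<in> G" "W \<circ> V \<in> G"
      using V W by (simp_all add: comp_mem adj_mem)
    show "W ((adj W \<circ> V) (T (adj (adj W \<circ> V) x))) = V (T (adj V (W x)))"
      by (simp add: adj_shift[OF V] apply_adj[OF W])
  qed
  then show ?thesis
    unfolding unitary_average_def by (simp add: BH_scaleC[OF mem_BH[OF W]] BH_sum[OF mem_BH[OF W]])
qed

lemma average_commute_span:
  assumes T: "T \<in> BH" and a: "a \<in> op_span G"
  shows "a (unitary_average G T x) = unitary_average G T (a x)"
proof -
  obtain c where c: "a = (\<lambda>x. \<Sum>V\<in>G. c V *\<^sub>C V x)"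
    using a unfolding op_span_def by blast
  have "unitary_average G T (a x) = (\<Sum>V\<in>G. unitary_average G T (c V *\<^sub>C V x))"
    unfolding c by (rule BH_sum[OF average_BH[OF T]])
  also have "\<dots> = (\<Sum>V\<in>G. c V *\<^sub>C V (unitary_average G T x))"
    by (simp add: average_scaleC[OF T] average_commute)
  finally show ?thesis
    unfolding c by simp
qed

lemma average_fixed:
  assumes commute: "\<And>V. V \<in> G \<Longrightarrow> T \<circ> V = V \<circ> T"
  shows "unitary_average G T = T"
proof
  fix x
  have "(\<Sum>V\<in>G. V (T (adj V x))) = (\<Sum>V\<in>G. T x)"
  proof (rule sum.cong)
    fix V assume V: "V \<in> G"
    have "V (T (adj V x)) = T (V (adj V x))"
      using fun_cong[OF commute[OF V]] by simp
    then show "V (T (adj V x)) = T x"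
      by (simp add: apply_adj[OF V])
  qed simp
  also have "\<dots> = of_nat (card G) *\<^sub>C T x"
    by (simp add: cvs.sum_constant_scale)
  finally show "unitary_average G T x = T x"
    unfolding unitary_average_def using card_pos by (simp add: scaleC_scaleC scaleC_one)
qed

lemma average_mem_star_subalgebra:
  assumes S: "star_subalgebra S" and "G \<subseteq> S" and "T \<in> S"
  shows "unitary_average G T \<in> S"
proof -
  have "(\<lambda>x. \<Sum>V\<in>G. (V \<circ> T \<circ> adj V) x) \<in> S"
  proof (rule star_subalgebra_sum[OF S finite_group])
    fix V assume "V \<in> G"
    then have "V \<in> S" "adj V \<in> S"
      using \<open>G \<subseteq> S\<close> adj_mem by blast+
    then show "V \<circ> T \<circ> adj V \<in> S"
      using S \<open>T \<in> S\<close> unfolding star_subalgebra_def by blast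
  qed
  then have "op_scale (1 / of_nat (card G)) (\<lambda>x. \<Sum>V\<in>G. (V \<circ> T \<circ> adj V) x) \<in> S"
    using S unfolding star_subalgebra_def by blast
  then show ?thesis
    unfolding op_scale_def unitary_average_def by simp
qed

lemma average_mem_unitary_conv_hull:
  assumes "G \<subseteq> S"
  shows "unitary_average G T \<in> unitary_conv_hull S T"
proof -
  define k where "k = card G"
  obtain h where h: "bij_betw h {..<k} G"
    using ex_bij_betw_nat_finite[OF finite_group] unfolding k_def atLeast0LessThan by blast
  have h_mem: "h i \<in> G" if "i < k" for i
    using h that by (auto simp: bij_betw_def)
  have "unitary_average G T = (\<lambda>x. \<Sum>i<k. complex_of_real (1 / real k) *\<^sub>C h i (T (adj (h i) x)))"
  proof
    fix x
    have "(\<Sum>i<k. h i (T (adj (h i) x))) = (\<Sum>V\<in>G. V (T (adj V x)))"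
      by (rule sum.reindex_bij_betw[OF h])
    moreover have "(\<Sum>i<k. complex_of_real (1 / real k) *\<^sub>C h i (T (adj (h i) x)))
        = complex_of_real (1 / real k) *\<^sub>C (\<Sum>i<k. h i (T (adj (h i) x)))"
      by (rule cvs.scale_sum_right[symmetric])
    ultimately show "unitary_average G T x = (\<Sum>i<k. complex_of_real (1 / real k) *\<^sub>C h i (T (adj (h i) x)))"
      unfolding unitary_average_def k_def[symmetric] by simp
  qed
  moreover have "\<forall>i<k. 0 \<le> 1 / real k \<and> h i \<in> unitaries S"
    using h_mem \<open>G \<subseteq> S\<close> comp_adj adj_comp unfolding unitaries_def by auto
  moreover have "(\<Sum>i<k. 1 / real k) = 1"
    using card_pos unfolding k_def by simp
  ultimately show ?thesis
    unfolding unitary_conv_hull_def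
    by (intro CollectI exI[of _ k] exI[of _ "\<lambda>i. 1 / real k"] exI[of _ h]) simp
qed

end

section \<open>Weak-operator limits of the averages along an ultrafilter\<close>

locale ultrafilter_averaging =
  fixes U :: "nat \<Rightarrow> 'a::complex_hilbert_space op set" and p :: "nat filter"
  assumes averaging: "\<And>n. unitary_averaging (U n)" and ultra: "free_ultrafilter p"
begin

lemma nonbot: "p \<noteq> bot"
  using ultra unfolding free_ultrafilter_def by blast

lemma cinner_average_le:
  assumes "T \<in> BH"
  shows "cmod (cinner (unitary_average (U n) T x) y) \<le> opnorm T * hnorm x * hnorm y"
  using cinner_Cauchy_Schwarz
    mult_right_mono[OF unitary_averaging.hnorm_average_le[OF averaging assms] hnorm_nonneg]
  by (rule order_trans)

lemma weak_limit_exists: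
  assumes T: "T \<in> BH"
  shows "\<exists>S\<in>BH. \<forall>x y. ((\<lambda>n. cinner (unitary_average (U n) T x) y) \<longlongrightarrow> cinner (S x) y) p"
proof -
  define B where "B x y = Lim p (\<lambda>n. cinner (unitary_average (U n) T x) y)" for x y
  have B: "((\<lambda>n. cinner (unitary_average (U n) T x) y) \<longlongrightarrow> B x y) p" for x y
  proof -
    obtain L where "((\<lambda>n. cinner (unitary_average (U n) T x) y) \<longlongrightarrow> L) p"
      using free_ultrafilter_tendsto_exists[OF ultra, of "\<lambda>n. cinner (unitary_average (U n) T x) y"]
        cinner_average_le[OF T] by blast
    then show ?thesis
      unfolding B_def using nonbot by (simp add: tendsto_Lim)
  qed
  have B_eqI: "B x y = c" if "((\<lambda>n. cinner (unitary_average (U n) T x) y) \<longlongrightarrow> c) p" for x y c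
    using tendsto_unique[OF nonbot B that] .
  have "\<exists>S\<in>BH. \<forall>x y. B x y = cinner (S x) y"
  proof (rule sesquilinear_representation[where K = "opnorm T"])
    show "B x (y + z) = B x y + B x z" for x y z
      by (rule B_eqI) (simp add: cinner_add_right tendsto_add[OF B B])
    show "B x (a *\<^sub>C y) = a * B x y" for x a y
      by (rule B_eqI) (simp add: cinner_scaleC_right tendsto_mult_left[OF B])
    show "B (x + y) z = B x z + B y z" for x y z
      by (rule B_eqI)
        (simp add: unitary_averaging.average_add[OF averaging T] cinner_add_left tendsto_add[OF B B])
    show "B (a *\<^sub>C x) y = cnj a * B x y" for a x y
      by (rule B_eqI)
        (simp add: unitary_averaging.average_scaleC[OF averaging T] cinner_scaleC_left tendsto_mult_left[OF B])
    show "cmod (B x y) \<le> opnorm T * hnorm x * hnorm y" for x y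
      using Lim_norm_ubound[OF nonbot B] cinner_average_le[OF T] by simp
  qed
  then show ?thesis
    using B by metis
qed

lemma
  assumes T: "T \<in> BH"
  shows Phi_tp_BH: "Phi_tp U p T \<in> BH"
    and Phi_tp_tendsto:
      "((\<lambda>n. cinner (unitary_average (U n) T x) y) \<longlongrightarrow> cinner (Phi_tp U p T x) y) p"
proof -
  obtain S where S: "S \<in> BH" "\<forall>x y. ((\<lambda>n. cinner (unitary_average (U n) T x) y) \<longlongrightarrow> cinner (S x) y) p"
    using weak_limit_exists[OF T] by blast
  have "\<exists>!S. S \<in> BH \<and> (\<forall>x y. ((\<lambda>n. cinner (unitary_average (U n) T x) y) \<longlongrightarrow> cinner (S x) y) p)"
  proof (rule ex1I[of _ S])
    fix S' assume "S' \<in> BH \<and> (\<forall>x y. ((\<lambda>n. cinner (unitary_average (U n) T x) y) \<longlongrightarrow> cinner (S' x) y) p)"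
    then show "S' = S"
      using S by (intro ext cinner_eq_imp_eq_left tendsto_unique[OF nonbot]) blast+
  qed (use S in blast)
  from theI'[OF this] show "Phi_tp U p T \<in> BH"
    and "((\<lambda>n. cinner (unitary_average (U n) T x) y) \<longlongrightarrow> cinner (Phi_tp U p T x) y) p"
    unfolding Phi_tp_def by blast+
qed

lemma Phi_tp_eqI:
  assumes "T \<in> BH"
    and "\<And>x y. ((\<lambda>n. cinner (unitary_average (U n) T x) y) \<longlongrightarrow> cinner (S x) y) p"
  shows "Phi_tp U p T = S"
  using assms by (intro ext cinner_eq_imp_eq_left tendsto_unique[OF nonbot Phi_tp_tendsto])

lemma hnorm_Phi_tp_le:
  assumes T: "T \<in> BH"
  shows "hnorm (Phi_tp U p T x) \<le> opnorm T * hnorm x"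
proof (cases "Phi_tp U p T x = 0")
  case True
  then show ?thesis
    using opnorm_nonneg[OF T] by simp
next
  case False
  have "(hnorm (Phi_tp U p T x))\<^sup>2 = cmod (cinner (Phi_tp U p T x) (Phi_tp U p T x))"
    by (simp add: cinner_self_eq_hnorm_power2 norm_power)
  also have "\<dots> \<le> opnorm T * hnorm x * hnorm (Phi_tp U p T x)"
    using Lim_norm_ubound[OF nonbot Phi_tp_tendsto[OF T]] cinner_average_le[OF T] by simp
  finally show ?thesis
    using hnorm_pos[OF False] by (simp add: power2_eq_square)
qed

lemma opnorm_Phi_tp_le: "T \<in> BH \<Longrightarrow> opnorm (Phi_tp U p T) \<le> opnorm T"
  by (rule opnorm_le) (simp_all add: opnorm_nonneg hnorm_Phi_tp_le)

lemma Phi_tp_op_plus: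
  assumes S: "S \<in> BH" and T: "T \<in> BH"
  shows "Phi_tp U p (op_plus S T) = op_plus (Phi_tp U p S) (Phi_tp U p T)"
proof (rule Phi_tp_eqI[OF op_plus_BH[OF S T]])
  fix x y
  show "((\<lambda>n. cinner (unitary_average (U n) (op_plus S T) x) y)
      \<longlongrightarrow> cinner (op_plus (Phi_tp U p S) (Phi_tp U p T) x) y) p"
    using tendsto_add[OF Phi_tp_tendsto[OF S] Phi_tp_tendsto[OF T]]
    unfolding unitary_averaging.average_op_plus[OF averaging] by (simp add: op_plus_def cinner_add_left)
qed

lemma Phi_tp_op_scale:
  assumes T: "T \<in> BH"
  shows "Phi_tp U p (op_scale a T) = op_scale a (Phi_tp U p T)"
proof (rule Phi_tp_eqI[OF op_scale_BH[OF T]])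
  fix x y
  show "((\<lambda>n. cinner (unitary_average (U n) (op_scale a T) x) y)
      \<longlongrightarrow> cinner (op_scale a (Phi_tp U p T) x) y) p"
    using tendsto_mult_left[OF Phi_tp_tendsto[OF T]]
    unfolding unitary_averaging.average_op_scale[OF averaging] by (simp add: op_scale_def cinner_scaleC_left)
qed

lemma Phi_tp_commute:
  assumes T: "T \<in> BH" and a: "a \<in> BH"
    and commute: "eventually (\<lambda>n. \<forall>x. a (unitary_average (U n) T x) = unitary_average (U n) T (a x)) p"
  shows "Phi_tp U p T \<circ> a = a \<circ> Phi_tp U p T"
proof (rule ext, rule cinner_eq_imp_eq_left)
  fix x y
  have eq: "eventually (\<lambda>n. cinner (unitary_average (U n) T x) (adj a y)
      = cinner (unitary_average (U n) T (a x)) y) p"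
    using commute by eventually_elim (simp flip: cinner_adj[OF a])
  have "((\<lambda>n. cinner (unitary_average (U n) T (a x)) y) \<longlongrightarrow> cinner (Phi_tp U p T x) (adj a y)) p"
    using Phi_tp_tendsto[OF T, of x "adj a y"] by (rule iffD1[OF tendsto_cong[OF eq]])
  then have "cinner (Phi_tp U p T (a x)) y = cinner (Phi_tp U p T x) (adj a y)"
    by (rule tendsto_unique[OF nonbot Phi_tp_tendsto[OF T]])
  then show "cinner ((Phi_tp U p T \<circ> a) x) y = cinner ((a \<circ> Phi_tp U p T) x) y"
    by (simp add: cinner_adj[OF a])
qed

text \<open>Since \<open>p\<close> is free, each \<open>\<AA>\<^sub>m\<close> lies in the span of \<open>\<U>\<^sub>n\<close> for \<open>p\<close>-almost every \<open>n\<close>.\<close>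
lemma Phi_tp_mem_commutant:
  assumes asc: "\<And>n. A n \<subseteq> A (Suc n)" and A_BH: "\<And>n. A n \<subseteq> BH"
    and spans: "\<And>n. op_span (U n) = A n" and T: "T \<in> BH"
  shows "Phi_tp U p T \<in> commutant (ultraweak_closure (\<Union>n. A n))"
proof -
  have "Phi_tp U p T \<circ> a = a \<circ> Phi_tp U p T" if "a \<in> A m" for a m
  proof (rule Phi_tp_commute[OF T])
    show "a \<in> BH"
      using A_BH that by blast
    have "eventually (\<lambda>n. m \<le> n) p"
      using free_ultrafilter_le_sequentially[OF ultra] eventually_ge_at_top filter_leD by blast
    then show "eventually (\<lambda>n. \<forall>x. a (unitary_average (U n) T x) = unitary_average (U n) T (a x)) p"
    proof eventually_elim
      case (elim n)
      then have "a \<in> op_span (U n)"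
        using lift_Suc_mono_le[of A, OF asc elim] that spans by blast
      then show ?case
        using unitary_averaging.average_commute_span[OF averaging T] by blast
    qed
  qed
  then have "Phi_tp U p T \<circ> X = X \<circ> Phi_tp U p T" if "X \<in> ultraweak_closure (\<Union>n. A n)" for X
    using commute_wot_closure[OF Phi_tp_BH[OF T]] ultraweak_closure_subset_wot_closure that by blast
  then show ?thesis
    unfolding commutant_def using Phi_tp_BH[OF T] by blast
qed

lemma Phi_tp_fixed:
  assumes "T \<in> commutant M" and "\<And>n. U n \<subseteq> M"
  shows "Phi_tp U p T = T"
proof -
  have "unitary_average (U n) T = T" for n
    using assms unfolding commutant_def
    by (intro unitary_averaging.average_fixed[OF averaging]) blast
  then show ?thesis
    using assms(1) unfolding commutant_def by (intro Phi_tp_eqI) simp_all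
qed

lemma Phi_tp_mem_wot_closure:
  assumes T: "T \<in> BH" and Y: "\<And>n. unitary_average (U n) T \<in> Y"
  shows "Phi_tp U p T \<in> wot_closure Y"
  unfolding wot_closure_def
proof (intro CollectI conjI allI impI)
  show "Phi_tp U p T \<in> BH"
    by (rule Phi_tp_BH[OF T])
  fix F :: "('a \<times> 'a) set" and e :: real
  assume "finite F" and "e > 0"
  have "\<forall>z\<in>F. eventually (\<lambda>n. cmod (cinner (Phi_tp U p T (fst z)) (snd z)
      - cinner (unitary_average (U n) T (fst z)) (snd z)) < e) p"
    using Phi_tp_tendsto[OF T] \<open>e > 0\<close> by (auto simp: tendsto_iff dist_norm norm_minus_commute)
  then have "eventually (\<lambda>n. \<forall>z\<in>F. cmod (cinner (Phi_tp U p T (fst z)) (snd z)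
      - cinner (unitary_average (U n) T (fst z)) (snd z)) < e) p"
    using \<open>finite F\<close> by (simp add: eventually_ball_finite)
  then obtain n where "\<forall>z\<in>F. cmod (cinner (Phi_tp U p T (fst z)) (snd z)
      - cinner (unitary_average (U n) T (fst z)) (snd z)) < e"
    using eventually_happens nonbot by blast
  then show "\<exists>a\<in>Y. \<forall>(x, y)\<in>F. cmod (cinner (Phi_tp U p T x) y - cinner (a x) y) < e"
    using Y by fastforce
qed

lemma Phi_tp_cond_exp:
  assumes nontriv: "\<exists>x::'a. x \<noteq> 0"
    and S: "S \<subseteq> BH" "id \<in> S" "\<And>T. T \<in> S \<Longrightarrow> Phi_tp U p T \<in> S"
    and range: "\<And>T. T \<in> BH \<Longrightarrow> Phi_tp U p T \<in> commutant M" and U_M: "\<And>n. U n \<subseteq> M"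
  shows "cond_exp (Phi_tp U p) S (S \<inter> commutant M)"
proof (rule cond_exp_if_contractive_retraction[OF nontriv S(1)])
  show "S \<inter> commutant M \<subseteq> S"
    by blast
  show "id \<in> S \<inter> commutant M"
    using S(2) id_BH unfolding commutant_def by auto
  show "Phi_tp U p T \<in> S \<inter> commutant M" if "T \<in> S" for T
    using that S range by blast
  show "Phi_tp U p T = T" if "T \<in> S \<inter> commutant M" for T
    using that Phi_tp_fixed U_M by blast
  show "Phi_tp U p (op_plus T1 T2) = op_plus (Phi_tp U p T1) (Phi_tp U p T2)"
    if "T1 \<in> S" "T2 \<in> S" for T1 T2
    using that S(1) Phi_tp_op_plus by blast
  show "Phi_tp U p (op_scale a T) = op_scale a (Phi_tp U p T)" if "T \<in> S" for a T
    using that S(1) Phi_tp_op_scale by blast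
  show "opnorm (Phi_tp U p T) \<le> opnorm T" if "T \<in> S" for T
    using that S(1) opnorm_Phi_tp_le by blast
qed

lemma Phi_tp_proper_cond_exp:
  assumes nontriv: "\<exists>x::'a. x \<noteq> 0" and vN: "von_neumann_algebra S"
    and range: "\<And>T. T \<in> BH \<Longrightarrow> Phi_tp U p T \<in> commutant M" and U_M: "\<And>n. U n \<subseteq> M"
    and "M \<subseteq> S"
  shows "proper_cond_exp (Phi_tp U p) S (S \<inter> commutant M)"
proof -
  have S: "star_subalgebra S" "wot_closure S \<subseteq> S" "S \<subseteq> BH" "id \<in> S"
    using vN unfolding von_neumann_algebra_def star_subalgebra_def by blast+
  have U_S: "U n \<subseteq> S" for n
    using U_M \<open>M \<subseteq> S\<close> by blast
  have "Phi_tp U p T \<in> S" if "T \<in> S" for T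
    using that S unitary_averaging.average_mem_star_subalgebra[OF averaging S(1) U_S]
      Phi_tp_mem_wot_closure[of T S] by blast
  then have "cond_exp (Phi_tp U p) S (S \<inter> commutant M)"
    by (rule Phi_tp_cond_exp[OF nontriv S(3,4) _ range U_M])
  moreover have "Phi_tp U p T \<in> wot_closure (unitary_conv_hull S T)" if "T \<in> S" for T
    using that S(3) unitary_averaging.average_mem_unitary_conv_hull[OF averaging U_S]
    by (intro Phi_tp_mem_wot_closure) auto
  ultimately show ?thesis
    unfolding proper_cond_exp_def by blast
qed

end

theorem propositionB:
  fixes R :: "'h::complex_hilbert_space op set"
    and A :: "nat \<Rightarrow> 'h op set"
    and U :: "nat \<Rightarrow> 'h op set"
    and p :: "nat filter"
  assumes nontriv: "\<exists>x::'h. x \<noteq> 0"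
    and fd: "\<And>n. fin_dim_C_star (A n)"
    and asc: "\<And>n. A n \<subseteq> A (Suc n)"
    and vN: "von_neumann_algebra R"
    and R_def: "R = ultraweak_closure (\<Union>n. A n)"
    and grp: "\<And>n. finite_unitary_group (U n) (A n)"
    and spans: "\<And>n. op_span (U n) = A n"
    and ultra: "free_ultrafilter p"
  shows "cond_exp (Phi_tp U p) BH (commutant R)
    \<and> (\<forall>S. von_neumann_algebra S \<and> R \<subseteq> S \<longrightarrow>
           proper_cond_exp (Phi_tp U p) S (S \<inter> commutant R))"
proof -
  have A_BH: "A n \<subseteq> BH" for n
    using fd unfolding fin_dim_C_star_def star_subalgebra_def by blast
  have U_R: "U n \<subseteq> R" for n
    using grp[of n] ultraweak_closure_subset[of "\<Union>n. A n"] A_BH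
    unfolding R_def finite_unitary_group_def unitaries_def by blast
  interpret ultrafilter_averaging U p
    using grp A_BH ultra
    by unfold_locales (auto intro: unitary_averaging.intro finite_unitary_group_mono)
  have range: "Phi_tp U p T \<in> commutant R" if "T \<in> BH" for T
    unfolding R_def using that by (rule Phi_tp_mem_commutant[OF asc A_BH spans])
  have "BH \<inter> commutant R = commutant R"
    unfolding commutant_def by blast
  then show ?thesis
    using Phi_tp_cond_exp[OF nontriv subset_refl id_BH Phi_tp_BH range U_R]
      Phi_tp_proper_cond_exp[OF nontriv _ range U_R] by simp
qed

end
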